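(* Let $\mathrm{EXACT}_2:\{0,1\}^4\to\{0,1\}$ be the function $\mathrm{EXACT}_2(x)=1$ if and only if $|x|=2$. Then $Q_E(\mathrm{EXACT}_2)=2$.
   Context: $|x|$ denotes the Hamming weight of a bit string $x$. Quantum query model: a $t$-query quantum query algorithm on inputs $x\in\{0,1\}^m$ acts on a Hilbert space $\mathcal H_{\rm in}\otimes\mathcal H_{\rm work}\otimes\mathcal H_{\rm out}$, where $\mathcal H_{\rm in}$ has orthonormal basis $|0\rangle,\dots,|m\rangle$, $\mathcal H_{\rm work}$ is a finite-dimensional workspace of arbitrary size, and $\mathcal H_{\rm out}$ is one qubit. It is specified by input-independent unitaries $U_0,\dots,U_t$, and on input $x$ produces the state $U_tO_xU_{t-1}O_x\cdots O_xU_0|0\rangle$ ($t$ applications of $O_x$), where the oracle $O_x$ acts on $\mathcal H_{\rm in}$ by $|i\rangle\mapsto(-1)^{x_i}|i\rangle$ with the convention $x_0=0$ (and as the identity on the other registers). The output is obtained by measuring $\mathcal H_{\rm out}$ in the computational basis. The algorithm computes $h$ exactly if for every $x$ the output equals $h(x)$ with probability $1$. $Q_E(h)$ is the minimum $t$ such that some $t$-query quantum query algorithm computes $h$ exactly. *)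

theory Defs
  imports "Jordan_Normal_Form.Matrix"
begin

(* Hilbert space H_in (x) H_work (x) H_out with H_in of dimension m+1 (basis |0>..|m>),
   H_work of dimension w (w >= 1), H_out one qubit.
   Basis vector |i>|j>|b> (i <= m, j < w, b < 2) is coordinate  i*(2*w) + j*2 + b. *)

definition qdim :: "nat \<Rightarrow> nat \<Rightarrow> nat" where
  "qdim m w = (m + 1) * w * 2"

definition cadjoint :: "complex mat \<Rightarrow> complex mat" where
  "cadjoint U = mat (dim_col U) (dim_row U) (\<lambda>(i, j). cnj (U $$ (j, i)))"

definition unitary_mat :: "nat \<Rightarrow> complex mat \<Rightarrow> bool" where
  "unitary_mat d U \<longleftrightarrow> U \<in> carrier_mat d d \<and> cadjoint U * U = 1\<^sub>m d"

(* input bit x_i for i in {0..m}, input given as a bool list of length m,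
   x_i = xs ! (i - 1) for 1 <= i <= m, and the convention x_0 = 0 *)
definition qbit :: "bool list \<Rightarrow> nat \<Rightarrow> bool" where
  "qbit xs i = (if i = 0 then False else xs ! (i - 1))"

definition query_op :: "nat \<Rightarrow> nat \<Rightarrow> bool list \<Rightarrow> complex mat" where
  "query_op m w xs = mat (qdim m w) (qdim m w)
     (\<lambda>(r, c). if r = c then (if qbit xs (r div (2 * w)) then -1 else 1) else 0)"

fun run :: "nat \<Rightarrow> nat \<Rightarrow> (nat \<Rightarrow> complex mat) \<Rightarrow> bool list \<Rightarrow> nat \<Rightarrow> complex vec" where
  "run m w U xs 0 = U 0 *\<^sub>v unit_vec (qdim m w) 0"
| "run m w U xs (Suc k) = U (Suc k) *\<^sub>v (query_op m w xs *\<^sub>v run m w U xs k)"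

definition out_prob :: "nat \<Rightarrow> nat \<Rightarrow> complex vec \<Rightarrow> bool \<Rightarrow> real" where
  "out_prob m w \<psi> b = (\<Sum>r\<in>{r. r < qdim m w \<and> (r mod 2 = 1) = b}. (cmod (\<psi> $ r))\<^sup>2)"

definition computes_exactly ::
  "nat \<Rightarrow> (bool list \<Rightarrow> bool) \<Rightarrow> nat \<Rightarrow> nat \<Rightarrow> (nat \<Rightarrow> complex mat) \<Rightarrow> bool" where
  "computes_exactly m h t w U \<longleftrightarrow>
     w \<ge> 1 \<and> (\<forall>k\<le>t. unitary_mat (qdim m w) (U k)) \<and>
     (\<forall>xs. length xs = m \<longrightarrow> out_prob m w (run m w U xs t) (h xs) = 1)"

definition Q_E :: "nat \<Rightarrow> (bool list \<Rightarrow> bool) \<Rightarrow> nat" where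
  "Q_E m h = (LEAST t. \<exists>w U. computes_exactly m h t w U)"

definition EXACT2 :: "bool list \<Rightarrow> bool" where
  "EXACT2 xs \<longleftrightarrow> count_list xs True = 2"

end

theory Submission
  imports Defs
begin

(* Unitaries and the oracle preserve the squared norm, so an exact
   algorithm puts zero amplitude on every basis state whose output bit is wrong.
   With zero queries the final state does not depend on the input, so only constant
   functions are computed.  With one query the final state is linear in the sign
   vector ((-1)^{x_i})_i; as the sign vectors of 1100, 0100, 0000, 1000 satisfy
   s(1100) = s(0100) - s(0000) + s(1000), the output-1 amplitudes on 1100 are a
   combination of those on three inputs of weight <= 1, hence vanish, contradicting
   EXACT_2(1100) = 1.

   An explicit 2-query algorithm with one-dimensional workspace:
   apply a 5x5 unitary M (built from a primitive cube root of unity) on the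
   output-0 subspace, query, apply M, query, and finally rotate the vector M|0>
   onto the output-1 basis state |0>|0>|1>; its amplitude has modulus 1 exactly
   when |x| = 2 (checked over all 16 inputs). *)

section \<open>Norm preservation and exact outputs\<close>

definition sq_norm :: "complex vec \<Rightarrow> real" where
  "sq_norm v = (\<Sum>r<dim_vec v. (cmod (v $ r))\<^sup>2)"

(* squared moduli summed in C, so that norms can be computed algebraically *)
lemma of_real_sum_cmod_sq:
  "complex_of_real (\<Sum>r\<in>A. (cmod (f r))\<^sup>2) = (\<Sum>r\<in>A. cnj (f r) * f r)"
proof -
  have "\<And>r. complex_of_real ((cmod (f r))\<^sup>2) = cnj (f r) * f r"
    by (subst complex_norm_square) (simp add: mult.commute)
  then show ?thesis by (simp only: of_real_sum)
qed

lemma unitary_columns_orthonormal: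
  assumes "unitary_mat d U" "a < d" "b < d"
  shows "(\<Sum>r<d. cnj (U $$ (r,a)) * U $$ (r,b)) = (if a = b then 1 else 0)"
proof -
  have U: "U \<in> carrier_mat d d" and UU: "cadjoint U * U = 1\<^sub>m d"
    using assms(1) by (auto simp: unitary_mat_def)
  have "(cadjoint U * U) $$ (a,b) = (\<Sum>r<d. cnj (U $$ (r,a)) * U $$ (r,b))"
    using U assms(2,3) by (simp add: cadjoint_def index_mult_mat scalar_prod_def atLeast0LessThan)
  then show ?thesis using UU assms(2,3) by simp
qed

lemma unitary_sq_norm:
  assumes U: "unitary_mat d U" and v: "v \<in> carrier_vec d"
  shows "sq_norm (U *\<^sub>v v) = sq_norm v"
proof -
  have Uc: "U \<in> carrier_mat d d" using U by (simp add: unitary_mat_def)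
  let ?w = "U *\<^sub>v v"
  have dims: "dim_vec ?w = d" "dim_vec v = d" using Uc v by auto
  have wr: "\<And>r. r < d \<Longrightarrow> ?w $ r = (\<Sum>a<d. U $$ (r,a) * v $ a)"
    using Uc v by (simp add: scalar_prod_def atLeast0LessThan)
  have "(\<Sum>r<d. cnj (?w $ r) * ?w $ r)
      = (\<Sum>r<d. \<Sum>b<d. \<Sum>a<d. cnj (U $$ (r,a)) * cnj (v $ a) * (U $$ (r,b) * v $ b))"
    by (simp add: wr sum_distrib_left sum_distrib_right)
  also have "\<dots> = (\<Sum>b<d. \<Sum>r<d. \<Sum>a<d. cnj (U $$ (r,a)) * cnj (v $ a) * (U $$ (r,b) * v $ b))"
    by (rule sum.swap)
  also have "\<dots> = (\<Sum>b<d. \<Sum>a<d. \<Sum>r<d. cnj (U $$ (r,a)) * cnj (v $ a) * (U $$ (r,b) * v $ b))"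
    by (rule sum.cong[OF refl], rule sum.swap)
  also have "\<dots> = (\<Sum>a<d. \<Sum>b<d. \<Sum>r<d. cnj (U $$ (r,a)) * cnj (v $ a) * (U $$ (r,b) * v $ b))"
    by (rule sum.swap)
  also have "\<dots> = (\<Sum>a<d. \<Sum>b<d. cnj (v $ a) * v $ b * (\<Sum>r<d. cnj (U $$ (r,a)) * U $$ (r,b)))"
    by (intro sum.cong refl) (simp add: sum_distrib_left mult_ac)
  also have "\<dots> = (\<Sum>a<d. \<Sum>b<d. cnj (v $ a) * v $ b * (if a = b then 1 else 0))"
    by (intro sum.cong refl) (simp add: unitary_columns_orthonormal[OF U])
  also have "\<dots> = (\<Sum>a<d. cnj (v $ a) * v $ a)"
    by (simp add: if_distrib cong: if_cong)
  finally have "complex_of_real (sq_norm ?w) = complex_of_real (sq_norm v)"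
    unfolding sq_norm_def dims of_real_sum_cmod_sq .
  then show ?thesis by simp
qed

definition oracle_sign :: "bool \<Rightarrow> complex" where
  "oracle_sign b = (if b then -1 else 1)"

lemma mult_mat_vec_nth:
  assumes "A \<in> carrier_mat n n" "u \<in> carrier_vec n" "r < n"
  shows "(A *\<^sub>v u) $ r = (\<Sum>c<n. A $$ (r,c) * u $ c)"
  using assms by (simp add: scalar_prod_def atLeast0LessThan)

lemma query_op_carrier: "query_op m w xs \<in> carrier_mat (qdim m w) (qdim m w)"
  by (simp add: query_op_def)

lemma query_op_apply:
  assumes "v \<in> carrier_vec (qdim m w)" "r < qdim m w"
  shows "(query_op m w xs *\<^sub>v v) $ r = oracle_sign (qbit xs (r div (2*w))) * v $ r"
proof -
  have entry: "query_op m w xs $$ (r,c) = (if r = c then oracle_sign (qbit xs (r div (2*w))) else 0)"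
    if "c < qdim m w" for c
    using assms(2) that by (simp add: query_op_def oracle_sign_def)
  have "(query_op m w xs *\<^sub>v v) $ r = (\<Sum>c\<in>{0..<qdim m w}. query_op m w xs $$ (r,c) * v $ c)"
    using assms by (simp add: query_op_def scalar_prod_def)
  also have "\<dots> = (\<Sum>c\<in>{0..<qdim m w}. (if r = c then oracle_sign (qbit xs (r div (2*w))) * v $ c else 0))"
    by (intro sum.cong) (auto simp: entry)
  also have "\<dots> = oracle_sign (qbit xs (r div (2*w))) * v $ r" using assms(2) by simp
  finally show ?thesis .
qed

lemma query_op_sq_norm:
  assumes "v \<in> carrier_vec (qdim m w)"
  shows "sq_norm (query_op m w xs *\<^sub>v v) = sq_norm v"
proof -
  have dims: "dim_vec (query_op m w xs *\<^sub>v v) = qdim m w" "dim_vec v = qdim m w"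
    using assms by (auto simp: query_op_def)
  show ?thesis
    unfolding sq_norm_def dims
    by (rule sum.cong) (auto simp: query_op_apply[OF assms] norm_mult oracle_sign_def)
qed

lemma run_carrier:
  assumes "\<forall>k\<le>t. unitary_mat (qdim m w) (U k)" "k \<le> t"
  shows "run m w U xs k \<in> carrier_vec (qdim m w)"
  using assms(2)
proof (induction k)
  case 0
  then show ?case using assms(1) by (auto simp: unitary_mat_def)
next
  case (Suc k)
  then have "U (Suc k) \<in> carrier_mat (qdim m w) (qdim m w)"
    using assms(1) by (auto simp: unitary_mat_def)
  with Suc show ?case by (simp del: run.simps(1)) (meson Suc_leD mult_mat_vec_carrier query_op_carrier)
qed

lemma run_sq_norm:
  assumes "w \<ge> 1" "\<forall>k\<le>t. unitary_mat (qdim m w) (U k)" "k \<le> t"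
  shows "sq_norm (run m w U xs k) = 1"
  using assms(3)
proof (induction k)
  case 0
  have "sq_norm (unit_vec (qdim m w) 0) = (\<Sum>r<qdim m w. if r = 0 then 1 else 0)"
    unfolding sq_norm_def by (intro sum.cong) (auto simp: unit_vec_def)
  also have "\<dots> = 1" using assms(1) by (simp add: qdim_def)
  finally have "sq_norm (unit_vec (qdim m w) 0) = 1" .
  moreover have "unitary_mat (qdim m w) (U 0)" using assms(2) by simp
  ultimately show ?case by (simp add: unitary_sq_norm)
next
  case (Suc k)
  then have IH: "sq_norm (run m w U xs k) = 1" and state: "run m w U xs k \<in> carrier_vec (qdim m w)"
    using run_carrier[OF assms(2)] by auto
  have queried: "query_op m w xs *\<^sub>v run m w U xs k \<in> carrier_vec (qdim m w)"
    using state by (meson mult_mat_vec_carrier query_op_carrier)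
  have "unitary_mat (qdim m w) (U (Suc k))" using assms(2) Suc.prems by auto
  then show ?case using IH state queried by (simp add: unitary_sq_norm query_op_sq_norm)
qed

lemma out_prob_total:
  assumes "v \<in> carrier_vec (qdim m w)"
  shows "out_prob m w v True + out_prob m w v False = sq_norm v"
proof -
  have "{r. r < qdim m w \<and> (r mod 2 = 1) = True} \<union> {r. r < qdim m w \<and> (r mod 2 = 1) = False}
      = {..<qdim m w}" by auto
  moreover have "{r. r < qdim m w \<and> (r mod 2 = 1) = True} \<inter> {r. r < qdim m w \<and> (r mod 2 = 1) = False}
      = {}" by auto
  ultimately show ?thesis using assms unfolding out_prob_def sq_norm_def
    by (simp add: sum.union_disjoint[symmetric])
qed

lemma out_prob_eq_0_iff:
  "out_prob m w v b = 0 \<longleftrightarrow> (\<forall>r < qdim m w. (r mod 2 = 1) = b \<longrightarrow> v $ r = 0)"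
  unfolding out_prob_def by (subst sum_nonneg_eq_0_iff) auto

lemma exact_wrong_amplitude_zero:
  assumes alg: "computes_exactly m h t w U" and xs: "length xs = m"
    and r: "r < qdim m w" "(r mod 2 = 1) \<noteq> h xs"
  shows "run m w U xs t $ r = 0"
proof -
  have w: "w \<ge> 1" and U: "\<forall>k\<le>t. unitary_mat (qdim m w) (U k)"
    and right: "out_prob m w (run m w U xs t) (h xs) = 1"
    using alg xs by (auto simp: computes_exactly_def)
  have "out_prob m w (run m w U xs t) True + out_prob m w (run m w U xs t) False = 1"
    using out_prob_total[OF run_carrier[OF U]] run_sq_norm[OF w U] by simp
  with right have "out_prob m w (run m w U xs t) (\<not> h xs) = 0"
    by (cases "h xs") simp_all
  with r show ?thesis unfolding out_prob_eq_0_iff by auto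
qed

section \<open>Lower bound\<close>

(* without queries the final state is input-independent, so only constant
   functions are computed exactly *)
lemma zero_query_constant:
  assumes alg: "computes_exactly m h 0 w U"
    and xs: "length xs = m" and ys: "length ys = m"
  shows "h xs = h ys"
proof (rule ccontr)
  assume differ: "h xs \<noteq> h ys"
  have w: "w \<ge> 1" and U: "\<forall>k\<le>0. unitary_mat (qdim m w) (U k)"
    using alg by (auto simp: computes_exactly_def)
  have vanish: "run m w U xs 0 $ r = 0" if "r < qdim m w" for r
  proof (cases "(r mod 2 = 1) = h xs")
    case True
    then have "run m w U ys 0 $ r = 0"
      using exact_wrong_amplitude_zero[OF alg ys that] differ by simp
    then show ?thesis by simp
  qed (use exact_wrong_amplitude_zero[OF alg xs that] in simp)
  moreover have "dim_vec (run m w U xs 0) = qdim m w"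
    using carrier_vecD[OF run_carrier[OF U le0]] .
  ultimately have "sq_norm (run m w U xs 0) = 0"
    unfolding sq_norm_def by simp
  then show False using run_sq_norm[OF w U, of 0] by simp
qed

(* after one query the state is linear in the sign vector of the input *)
lemma one_query_run_affine:
  assumes U: "\<forall>k\<le>1. unitary_mat (qdim m w) (U k)"
    and sign: "\<And>i. i \<le> m \<Longrightarrow>
      oracle_sign (qbit a i) = oracle_sign (qbit b i) - oracle_sign (qbit c i) + oracle_sign (qbit d i)"
    and r: "r < qdim m w"
  shows "run m w U a 1 $ r = run m w U b 1 $ r - run m w U c 1 $ r + run m w U d 1 $ r"
proof -
  define n where "n = qdim m w"
  define v where "v = U 0 *\<^sub>v unit_vec n 0"
  have v: "v \<in> carrier_vec n" using run_carrier[OF U, of 0] by (simp add: v_def n_def)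
  have U1: "U 1 \<in> carrier_mat n n" using U by (auto simp: unitary_mat_def n_def)
  have run_one: "run m w U xs 1 $ r = (\<Sum>c<n. U 1 $$ (r,c) * (oracle_sign (qbit xs (c div (2*w))) * v $ c))"
    for xs
  proof -
    have "query_op m w xs *\<^sub>v v \<in> carrier_vec n"
      using v unfolding n_def by (meson mult_mat_vec_carrier query_op_carrier)
    from mult_mat_vec_nth[OF U1 this] r have "run m w U xs 1 $ r = (\<Sum>c<n. U 1 $$ (r,c) * (query_op m w xs *\<^sub>v v) $ c)"
      by (simp add: v_def n_def)
    also have "\<dots> = (\<Sum>c<n. U 1 $$ (r,c) * (oracle_sign (qbit xs (c div (2*w))) * v $ c))"
      using v by (intro sum.cong) (simp_all add: n_def query_op_apply)
    finally show ?thesis .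
  qed
  have block: "j div (2*w) \<le> m" if "j < n" for j
  proof -
    have "j < (m+1) * (2*w)" using that by (simp add: n_def qdim_def algebra_simps)
    then have "j div (2*w) < m + 1" by (rule less_mult_imp_div_less)
    then show ?thesis by simp
  qed
  show ?thesis
    unfolding run_one sum_subtractf[symmetric] sum.distrib[symmetric]
  proof (rule sum.cong[OF refl])
    fix j assume "j \<in> {..<n}"
    then have "j div (2*w) \<le> m" using block by simp
    then show "U 1 $$ (r,j) * (oracle_sign (qbit a (j div (2*w))) * v $ j)
      = U 1 $$ (r,j) * (oracle_sign (qbit b (j div (2*w))) * v $ j)
        - U 1 $$ (r,j) * (oracle_sign (qbit c (j div (2*w))) * v $ j)
        + U 1 $$ (r,j) * (oracle_sign (qbit d (j div (2*w))) * v $ j)"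
      by (subst sign) (simp_all add: algebra_simps)
  qed
qed

lemma one_query_second_difference:
  assumes alg: "computes_exactly m h 1 w U"
    and lens: "length a = m" "length b = m" "length c = m" "length d = m"
    and sign: "\<And>i. i \<le> m \<Longrightarrow>
      oracle_sign (qbit a i) = oracle_sign (qbit b i) - oracle_sign (qbit c i) + oracle_sign (qbit d i)"
    and zeros: "\<not> h b" "\<not> h c" "\<not> h d"
  shows "\<not> h a"
proof
  assume "h a"
  have U: "\<forall>k\<le>1. unitary_mat (qdim m w) (U k)"
    and exact: "out_prob m w (run m w U a 1) (h a) = 1"
    using alg lens(1) unfolding computes_exactly_def by auto
  have "run m w U a 1 $ r = 0" if r: "r < qdim m w" and odd: "r mod 2 = 1" for r
  proof -
    have "run m w U xs 1 $ r = 0" if "length xs = m" "\<not> h xs" for xs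
      using exact_wrong_amplitude_zero[OF alg that(1) r] that(2) odd by simp
    then show ?thesis
      using one_query_run_affine[OF U sign r] lens(2-4) zeros by (simp del: run.simps)
  qed
  then have "out_prob m w (run m w U a 1) True = 0"
    unfolding out_prob_eq_0_iff by simp
  with exact \<open>h a\<close> show False by simp
qed

lemma EXACT2_sign_relation:
  assumes "i \<le> 4"
  shows "oracle_sign (qbit [True,True,False,False] i)
    = oracle_sign (qbit [False,True,False,False] i) - oracle_sign (qbit [False,False,False,False] i)
      + oracle_sign (qbit [True,False,False,False] i)"
proof -
  have "i = 0 \<or> i = 1 \<or> i = 2 \<or> i = 3 \<or> i = 4" using assms by arith
  then show ?thesis by (elim disjE) (simp_all add: qbit_def oracle_sign_def)
qed

(* EXACT_2 is not constant and violates the second-difference condition *)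
lemma EXACT2_needs_two_queries:
  assumes "computes_exactly 4 EXACT2 t w U"
  shows "2 \<le> t"
proof (rule ccontr)
  assume "\<not> 2 \<le> t"
  then consider "t = 0" | "t = 1" by arith
  then show False
  proof cases
    case 1
    have "EXACT2 [True,True,False,False] = EXACT2 [False,False,False,False]"
      using zero_query_constant[OF assms[unfolded 1]] by simp
    then show False by (simp add: EXACT2_def)
  next
    case 2
    have "\<not> EXACT2 [True,True,False,False]"
      by (rule one_query_second_difference[OF assms[unfolded 2] _ _ _ _ EXACT2_sign_relation])
        (simp_all add: EXACT2_def)
    then show False by (simp add: EXACT2_def)
  qed
qed

section \<open>A two-query algorithm\<close>

definition omega3 :: complex where "omega3 = Complex (-1/2) (sqrt 3 / 2)"

lemma omega3_sq: "omega3 * omega3 = -1 - omega3"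
  by (simp add: omega3_def complex_eq_iff)

lemma cnj_omega3: "cnj omega3 = -1 - omega3"
  by (simp add: omega3_def complex_eq_iff)

definition mix :: "nat \<Rightarrow> nat \<Rightarrow> complex" where
  "mix j i = (if j = i then 0 else if j = 0 \<or> i = 0 then 1/2
     else if (j=1 \<and> i=2) \<or> (j=2 \<and> i=1) \<or> (j=3 \<and> i=4) \<or> (j=4 \<and> i=3) then 1/2
     else if (j=1 \<and> i=3) \<or> (j=3 \<and> i=1) \<or> (j=2 \<and> i=4) \<or> (j=4 \<and> i=2) then omega3/2
     else (-1-omega3)/2)"

(* with workspace dimension 1 the basis state |i>|0>|b> is coordinate 2i+b;
   U_mix applies M on the output-0 subspace *)
definition U_mix :: "complex mat" where
  "U_mix = mat 10 10 (\<lambda>(r,c). if even r \<and> even c then mix (r div 2) (c div 2)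
     else if r = c then 1 else 0)"

(* U_final applies M^* on the output-0 subspace and then swaps |0>|0>|0> with
   |0>|0>|1>, so that the amplitude at |0>|0>|1> is the overlap with M|0> *)
definition U_final :: "complex mat" where
  "U_final = mat 10 10 (\<lambda>(r,c). if r = 1 then (if even c then cnj (mix (c div 2) 0) else 0)
     else if r = 0 then (if c = 1 then 1 else 0)
     else if even r \<and> even c then cnj (mix (c div 2) (r div 2))
     else if r = c then 1 else 0)"

definition exact2_alg :: "nat \<Rightarrow> complex mat" where
  "exact2_alg k = (if k = 2 then U_final else U_mix)"

lemma less10_cases:
  "(i::nat) < 10 \<Longrightarrow> i=0 \<or> i=1 \<or> i=2 \<or> i=3 \<or> i=4 \<or> i=5 \<or> i=6 \<or> i=7 \<or> i=8 \<or> i=9"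
  by arith

lemma sum_lessThan_10:
  "(\<Sum>k<(10::nat). f k) = f 0 + f 1 + f 2 + f 3 + f 4 + f 5 + f 6 + f 7 + f 8 + (f 9 :: complex)"
  by (simp add: eval_nat_numeral)

lemma sum_lessThan_5:
  "(\<Sum>k<(5::nat). f k) = f 0 + f 1 + f 2 + f 3 + (f 4 :: complex)"
  by (simp add: eval_nat_numeral)

lemma unitary_mat_10I:
  assumes "U \<in> carrier_mat 10 10"
    "\<And>i j. i < 10 \<Longrightarrow> j < 10 \<Longrightarrow>
      (\<Sum>k<10. cnj (U $$ (k,i)) * U $$ (k,j)) = (if i = j then 1 else 0)"
  shows "unitary_mat 10 U"
  unfolding unitary_mat_def
proof (intro conjI)
  show "cadjoint U * U = 1\<^sub>m 10"
  proof (rule eq_matI)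
    fix i j assume "i < dim_row (1\<^sub>m 10 :: complex mat)" "j < dim_col (1\<^sub>m 10 :: complex mat)"
    then have ij: "i < 10" "j < 10" by auto
    have "(cadjoint U * U) $$ (i,j) = (\<Sum>k<10. cnj (U $$ (k,i)) * U $$ (k,j))"
      using assms(1) ij by (simp add: cadjoint_def index_mult_mat scalar_prod_def atLeast0LessThan)
    then show "(cadjoint U * U) $$ (i,j) = 1\<^sub>m 10 $$ (i,j)" using assms(2)[OF ij] ij by simp
  qed (use assms(1) in \<open>auto simp: cadjoint_def\<close>)
qed (fact assms(1))

lemma U_mix_unitary: "unitary_mat 10 U_mix"
proof (rule unitary_mat_10I)
  fix i j :: nat assume "i < 10" "j < 10"
  then show "(\<Sum>k<10. cnj (U_mix $$ (k,i)) * U_mix $$ (k,j)) = (if i = j then 1 else 0)"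
    apply (simp only: sum_lessThan_10)
    apply (elim less10_cases[elim_format] disjE)
    apply (simp_all add: U_mix_def mix_def cnj_omega3 algebra_simps omega3_sq)
    apply (simp_all add: field_simps)
    done
qed (simp add: U_mix_def)

lemma U_final_unitary: "unitary_mat 10 U_final"
proof (rule unitary_mat_10I)
  fix i j :: nat assume "i < 10" "j < 10"
  then show "(\<Sum>k<10. cnj (U_final $$ (k,i)) * U_final $$ (k,j)) = (if i = j then 1 else 0)"
    apply (simp only: sum_lessThan_10)
    apply (elim less10_cases[elim_format] disjE)
    apply (simp_all add: U_final_def mix_def cnj_omega3 algebra_simps omega3_sq)
    apply (simp_all add: field_simps)
    done
qed (simp add: U_final_def)

lemma exact2_alg_unitary: "\<forall>k\<le>2. unitary_mat (qdim 4 1) (exact2_alg k)"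
  by (simp add: qdim_def exact2_alg_def U_mix_unitary U_final_unitary)

lemma U_mix_apply:
  "U_mix *\<^sub>v vec 10 f = vec 10 (\<lambda>r. if even r then (\<Sum>i<5. mix (r div 2) i * f (2*i)) else f r)"
proof (rule eq_vecI)
  fix r assume "r < dim_vec (vec 10 (\<lambda>r. if even r then (\<Sum>i<5. mix (r div 2) i * f (2*i)) else f r))"
  then have r: "r < 10" by simp
  have "(U_mix *\<^sub>v vec 10 f) $ r = (\<Sum>c<10. U_mix $$ (r,c) * f c)"
    using r by (simp add: U_mix_def scalar_prod_def atLeast0LessThan)
  then show "(U_mix *\<^sub>v vec 10 f) $ r
      = vec 10 (\<lambda>r. if even r then (\<Sum>i<5. mix (r div 2) i * f (2*i)) else f r) $ r"
    using r
    by (simp only: sum_lessThan_10 sum_lessThan_5 index_vec)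
      (elim less10_cases[elim_format] disjE; simp add: U_mix_def)
qed (simp add: U_mix_def)

lemma U_final_apply_1: "(U_final *\<^sub>v vec 10 f) $ 1 = (\<Sum>i<5. cnj (mix i 0) * f (2*i))"
proof -
  have "(U_final *\<^sub>v vec 10 f) $ 1 = (\<Sum>c<10. U_final $$ (1,c) * f c)"
    by (simp add: U_final_def scalar_prod_def atLeast0LessThan)
  then show ?thesis by (simp add: sum_lessThan_10 sum_lessThan_5 U_final_def)
qed

lemma U_final_apply_odd:
  assumes "r < 10" "odd r" "r \<noteq> 1"
  shows "(U_final *\<^sub>v vec 10 f) $ r = f r"
proof -
  have "(U_final *\<^sub>v vec 10 f) $ r = (\<Sum>c<10. U_final $$ (r,c) * f c)"
    using assms by (simp add: U_final_def scalar_prod_def atLeast0LessThan)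
  then show ?thesis using assms
    by (simp only: sum_lessThan_10) (elim less10_cases[elim_format] disjE; simp add: U_final_def)
qed

lemma query_op_apply_4_1:
  "query_op 4 1 xs *\<^sub>v vec 10 f = vec 10 (\<lambda>r. oracle_sign (qbit xs (r div 2)) * f r)"
proof (rule eq_vecI)
  fix r assume "r < dim_vec (vec 10 (\<lambda>r. oracle_sign (qbit xs (r div 2)) * f r))"
  then have r: "r < qdim 4 1" by (simp add: qdim_def)
  have "vec 10 f \<in> carrier_vec (qdim 4 1)" by (simp add: qdim_def)
  from query_op_apply[OF this r, of xs] r
  show "(query_op 4 1 xs *\<^sub>v vec 10 f) $ r = vec 10 (\<lambda>r. oracle_sign (qbit xs (r div 2)) * f r) $ r"
    by (simp add: qdim_def)
qed (simp add: query_op_def qdim_def)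

lemma exact2_alg_final_state:
  "run 4 1 exact2_alg xs 2 = U_final *\<^sub>v (query_op 4 1 xs *\<^sub>v (U_mix *\<^sub>v
     (query_op 4 1 xs *\<^sub>v (U_mix *\<^sub>v vec 10 (\<lambda>r. if r = 0 then 1 else 0)))))"
  by (simp add: exact2_alg_def numeral_2_eq_2 qdim_def unit_vec_def)

lemma exact2_alg_answer_amplitude:
  "(cmod (run 4 1 exact2_alg [a,b,c,d] 2 $ 1))\<^sup>2 = (if EXACT2 [a,b,c,d] then 1 else 0)"
proof -
  let ?s = "\<lambda>i. oracle_sign (qbit [a,b,c,d] i)"
  have amplitude: "run 4 1 exact2_alg [a,b,c,d] 2 $ 1
      = (\<Sum>i<5. cnj (mix i 0) * (?s i * (\<Sum>k<5. mix i k * (?s k * (\<Sum>j<5. mix k j * (if j = 0 then 1 else 0))))))"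
    unfolding exact2_alg_final_state by (simp only: U_mix_apply query_op_apply_4_1 U_final_apply_1) simp
  show ?thesis
    unfolding amplitude
    apply (cases a; cases b; cases c; cases d)
      apply (simp_all add: sum_lessThan_5 mix_def qbit_def oracle_sign_def EXACT2_def)
     apply (simp_all add: cmod_power2 omega3_def complex_eq_iff)
    apply (simp_all add: power2_eq_square algebra_simps)
    done
qed

lemma exact2_alg_idle_amplitude:
  "r \<in> {3,5,7,9} \<Longrightarrow> run 4 1 exact2_alg xs 2 $ r = 0"
  unfolding exact2_alg_final_state U_mix_apply query_op_apply_4_1
  by (auto simp: U_final_apply_odd)

lemma exact2_alg_correct: "computes_exactly 4 EXACT2 2 1 exact2_alg"
  unfolding computes_exactly_def
proof (intro conjI allI impI)
  fix xs :: "bool list" assume "length xs = 4"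
  then obtain a b c d where xs: "xs = [a,b,c,d]"
    by (auto simp: length_Suc_conv numeral_eq_Suc)
  let ?\<psi> = "run 4 1 exact2_alg xs 2"
  have "{r. r < qdim 4 1 \<and> (r mod 2 = 1) = True} = {1,3,5,7,9}"
    by (auto simp: qdim_def dest!: less10_cases)
  then have "out_prob 4 1 ?\<psi> True = (\<Sum>r\<in>{1,3,5,7,9}. (cmod (?\<psi> $ r))\<^sup>2)"
    unfolding out_prob_def by simp
  also have "\<dots> = (if EXACT2 xs then 1 else 0)"
    using exact2_alg_idle_amplitude[of _ xs] exact2_alg_answer_amplitude[of a b c d] xs by simp
  finally have yes: "out_prob 4 1 ?\<psi> True = (if EXACT2 xs then 1 else 0)" .
  have "out_prob 4 1 ?\<psi> True + out_prob 4 1 ?\<psi> False = 1"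
    using out_prob_total[OF run_carrier[OF exact2_alg_unitary]] run_sq_norm[OF _ exact2_alg_unitary]
    by simp
  with yes show "out_prob 4 1 ?\<psi> (EXACT2 xs) = 1" by (cases "EXACT2 xs") simp_all
qed (use exact2_alg_unitary in auto)

theorem mainTheorem4:
  shows "Q_E 4 EXACT2 = 2"
  unfolding Q_E_def
proof (rule Least_equality)
  show "\<exists>w U. computes_exactly 4 EXACT2 2 w U" using exact2_alg_correct by blast
next
  fix t assume "\<exists>w U. computes_exactly 4 EXACT2 t w U"
  then show "2 \<le> t" using EXACT2_needs_two_queries by blast
qed

end
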